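(* The class of all bounded lattices with a unary operation $'$, $(L,\vee,\wedge,{}',0,1)$, in which the Sasaki operations form an adjoint pair coincides with the class of bounded lattices with complementation satisfying the identities $x\vee y'\approx y'\vee\big((x\vee y')\wedge y\big)$ and $x\wedge y\approx x\wedge\big((x\wedge y)\vee x'\big)$; in particular it is a variety.
   Context: A complementation is a unary operation $'$ with $x\vee x'\approx1$ and $x\wedge x'\approx0$. The Sasaki operations are $x\odot y=(x\vee y')\wedge y$ and $x\to y=x'\vee(x\wedge y)$; they form an adjoint pair if for all $x,y,z$: $x\odot y\le z$ iff $x\le y\to z$. *)

theory Defs
  imports Main
begin

definition complementation :: "('a::bounded_lattice \<Rightarrow> 'a) \<Rightarrow> bool" where
  "complementation c \<longleftrightarrow> (\<forall>x. sup x (c x) = top \<and> inf x (c x) = bot)"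

definition sasaki_prod :: "('a::bounded_lattice \<Rightarrow> 'a) \<Rightarrow> 'a \<Rightarrow> 'a \<Rightarrow> 'a" where
  "sasaki_prod c x y = inf (sup x (c y)) y"

definition sasaki_impl :: "('a::bounded_lattice \<Rightarrow> 'a) \<Rightarrow> 'a \<Rightarrow> 'a \<Rightarrow> 'a" where
  "sasaki_impl c x y = sup (c x) (inf x y)"

definition adjoint_pair :: "('a::bounded_lattice \<Rightarrow> 'a) \<Rightarrow> bool" where
  "adjoint_pair c \<longleftrightarrow>
     (\<forall>x y z. sasaki_prod c x y \<le> z \<longleftrightarrow> x \<le> sasaki_impl c y z)"

end

theory Submission
  imports Defs
begin

text \<open>The two identities say exactly that \<open>x \<le> y \<rightarrow> (x \<odot> y)\<close> and
  \<open>(y \<rightarrow> z) \<odot> y \<le> z\<close>, i.e.\ they are the unit and counit of the adjunction; since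
  \<open>\<odot>\<close> is monotone in its first and \<open>\<rightarrow>\<close> in its second argument, they are equivalent
  to adjointness.\<close>

lemma adjoint_pair_iff:
  "adjoint_pair c \<longleftrightarrow> (\<forall>x y z. inf (sup x (c y)) y \<le> z \<longleftrightarrow> x \<le> sup (c y) (inf y z))"
  unfolding adjoint_pair_def sasaki_prod_def sasaki_impl_def ..

lemma adjoint_pair_imp_complementation:
  assumes "adjoint_pair c"
  shows "complementation c"
  unfolding complementation_def
proof
  fix y
  have adj: "\<And>x z. inf (sup x (c y)) y \<le> z \<longleftrightarrow> x \<le> sup (c y) (inf y z)"
    using assms adjoint_pair_iff by blast
  have "top \<le> sup (c y) (inf y y)"
    using adj[of top y] by simp
  then have "sup y (c y) = top"
    by (simp add: sup_commute top_unique)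
  moreover have "inf (sup (c y) (c y)) y \<le> bot"
    using adj[of "c y" bot] by simp
  then have "inf y (c y) = bot"
    by (simp add: inf_commute bot_unique)
  ultimately show "sup y (c y) = top \<and> inf y (c y) = bot" ..
qed

lemma adjoint_pair_imp_sup_identity:
  assumes "adjoint_pair c"
  shows "sup x (c y) = sup (c y) (inf (sup x (c y)) y)"
proof (rule antisym)
  have "x \<le> sup (c y) (inf y (inf (sup x (c y)) y))"
    using assms adjoint_pair_iff by blast
  then have "x \<le> sup (c y) (inf (sup x (c y)) y)"
    by (simp add: inf_commute inf_left_commute)
  then show "sup x (c y) \<le> sup (c y) (inf (sup x (c y)) y)"
    by simp
  show "sup (c y) (inf (sup x (c y)) y) \<le> sup x (c y)"
    by (simp add: le_infI1)
qed

lemma adjoint_pair_imp_inf_identity: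
  assumes "adjoint_pair c"
  shows "inf x y = inf x (sup (inf x y) (c x))"
proof (rule antisym)
  show "inf x y \<le> inf x (sup (inf x y) (c x))"
    by simp
  have "inf (sup (sup (c x) (inf x y)) (c x)) x \<le> y"
    using assms adjoint_pair_iff by blast
  then have "inf (sup (inf x y) (c x)) x \<le> y"
    by (simp add: sup_commute sup_left_commute)
  then show "inf x (sup (inf x y) (c x)) \<le> inf x y"
    by (simp add: inf_commute)
qed

lemma sasaki_identities_imp_adjoint_pair:
  assumes unit: "\<And>x y. sup x (c y) = sup (c y) (inf (sup x (c y)) y)"
    and counit: "\<And>x y. inf x y = inf x (sup (inf x y) (c x))"
  shows "adjoint_pair c"
  unfolding adjoint_pair_iff
proof (intro allI iffI)
  fix x y z
  assume "inf (sup x (c y)) y \<le> z"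
  then have "inf (sup x (c y)) y \<le> inf y z"
    by simp
  have "x \<le> sup x (c y)"
    by simp
  also have "\<dots> = sup (c y) (inf (sup x (c y)) y)"
    by (rule unit)
  also have "\<dots> \<le> sup (c y) (inf y z)"
    using \<open>inf (sup x (c y)) y \<le> inf y z\<close> by (rule sup_mono[OF order_refl])
  finally show "x \<le> sup (c y) (inf y z)" .
next
  fix x y z
  assume "x \<le> sup (c y) (inf y z)"
  then have "sup x (c y) \<le> sup (inf y z) (c y)"
    by (simp add: sup_commute)
  then have "inf (sup x (c y)) y \<le> inf y (sup (inf y z) (c y))"
    by (simp add: le_infI1)
  also have "\<dots> = inf y z"
    by (rule counit[symmetric])
  finally show "inf (sup x (c y)) y \<le> z"
    by simp
qed

theorem mainTheorem3:
  fixes c :: "'a::bounded_lattice \<Rightarrow> 'a"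
  shows "adjoint_pair c \<longleftrightarrow>
           (complementation c \<and>
            (\<forall>x y. sup x (c y) = sup (c y) (inf (sup x (c y)) y)) \<and>
            (\<forall>x y. inf x y = inf x (sup (inf x y) (c x))))"
proof
  assume "adjoint_pair c"
  then show "complementation c \<and>
      (\<forall>x y. sup x (c y) = sup (c y) (inf (sup x (c y)) y)) \<and>
      (\<forall>x y. inf x y = inf x (sup (inf x y) (c x)))"
    using adjoint_pair_imp_complementation adjoint_pair_imp_sup_identity
      adjoint_pair_imp_inf_identity by blast
next
  assume "complementation c \<and>
      (\<forall>x y. sup x (c y) = sup (c y) (inf (sup x (c y)) y)) \<and>
      (\<forall>x y. inf x y = inf x (sup (inf x y) (c x)))"
  then show "adjoint_pair c"
    by (intro sasaki_identities_imp_adjoint_pair) blast+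
qed

end
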